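(* For every integer $d\geq 1$ and every finite abelian group $A$, the wreath product $A\wr\mathbb{Z}^d=\left(\bigoplus_{g\in\mathbb{Z}^d}A\right)\rtimes\mathbb{Z}^d$ (with $\mathbb{Z}^d$ acting by shifting coordinates) embeds in $\mathrm{IET}$.
   Context: $\mathrm{IET}$ denotes the group of interval exchange transformations of $[0,1)$: bijections of $[0,1)$ that are orientation-preserving piecewise isometries (piecewise translations), left-continuous, with finitely many discontinuity points. *)

theory Defs
  imports Complex_Main "HOL-Algebra.Group"
begin

text \<open>Interval exchange transformations of [0,1). Maps are normalised to be the
identity outside [0,1) so that equality of IETs is equality of functions.
A map is an IET if it is a bijection of [0,1) and there is a finite subdivision
0 = a_0 < a_1 < ... < a_n = 1 such that f is a translation on each [a_i, a_(i+1)).\<close>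

definition IET :: "(real \<Rightarrow> real) set" where
  "IET = {f. bij_betw f {0..<1} {0..<1}
            \<and> (\<forall>x. x \<notin> {0..<1} \<longrightarrow> f x = x)
            \<and> (\<exists>(a::nat \<Rightarrow> real) n. a 0 = 0 \<and> a n = 1 \<and> (\<forall>i<n. a i < a (Suc i))
                 \<and> (\<forall>i<n. \<exists>c. \<forall>x\<in>{a i..<a (Suc i)}. f x = x + c))}"

definition IET_group :: "(real \<Rightarrow> real) monoid" where
  "IET_group = \<lparr>carrier = IET, mult = (\<lambda>f g. f \<circ> g), one = id\<rparr>"

definition Zd :: "nat \<Rightarrow> (nat \<Rightarrow> int) set" where
  "Zd d = {v. \<forall>i\<ge>d. v i = 0}"

text \<open>Wreath product A wr Z^d = (direct sum over Z^d of A) semidirect Z^d, with Z^d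
acting by shifting coordinates: (z . f)(g) = f(g - z).\<close>

definition wreath_prod :: "('a, 'b) monoid_scheme \<Rightarrow> nat \<Rightarrow> (((nat \<Rightarrow> int) \<Rightarrow> 'a) \<times> (nat \<Rightarrow> int)) monoid" where
  "wreath_prod A d = \<lparr>
     carrier = {(f, z). z \<in> Zd d \<and> (\<forall>g\<in>Zd d. f g \<in> carrier A)
                 \<and> (\<forall>g. g \<notin> Zd d \<longrightarrow> f g = \<one>\<^bsub>A\<^esub>)
                 \<and> finite {g. f g \<noteq> \<one>\<^bsub>A\<^esub>}},
     mult = (\<lambda>(f, z) (f', z'). (\<lambda>g. f g \<otimes>\<^bsub>A\<^esub> f' (\<lambda>i. g i - z i), \<lambda>i. z i + z' i)),
     one = (\<lambda>g. \<one>\<^bsub>A\<^esub>, \<lambda>i. 0)\<rparr>"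

end

theory Submission
  imports Defs "HOL-Algebra.FiniteProduct" "HOL-Analysis.Continuum_Not_Denumerable"
begin

text \<open>Let n = |A|. Cut [0,1) into n intervals labelled by the elements of A and view each of
  them as a copy of the circle R/Z. Choose rotation numbers alpha_1, ..., alpha_d and a window
  length beta such that 1, alpha_1, ..., alpha_d, beta are linearly independent over Q (powers of
  a transcendental number will do). A vector z of Z^d rotates every circle by the phase
  alpha . z, and a lamp a placed at g multiplies by a the labels of the points of the window
  [alpha . g, alpha . g + beta) of the circle. These maps are interval exchanges obeying the
  relations of the wreath product. By independence the windows of distinct lamps have distinct
  endpoints, so just to the left of alpha . g only the window of g changes; hence the lamp
  configuration can be read off the action, and the representation is faithful.\<close>

section \<open>Rationally independent rotation numbers\<close>

definition transcendental :: "real \<Rightarrow> bool" where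
  "transcendental x \<longleftrightarrow>
     (\<forall>n (c::nat \<Rightarrow> int). (\<Sum>i\<le>n. of_int (c i) * x ^ i) = 0 \<longrightarrow> (\<forall>i\<le>n. c i = 0))"

text \<open>Countably many nonzero integer polynomials, each with finitely many roots, cannot exhaust
  the uncountable real line.\<close>

lemma ex_transcendental: "\<exists>x. transcendental x"
proof -
  define P where "P = {(n::nat, cs::int list). \<exists>i\<le>n. cs ! i \<noteq> 0}"
  define roots where "roots = (\<lambda>(n, cs). {x::real. (\<Sum>i\<le>n. of_int (cs ! i) * x ^ i) = 0})"
  have "countable (\<Union>p\<in>P. roots p)"
  proof (rule countable_UN)
    show "countable P" by (rule countable_subset[OF subset_UNIV]) simp
    fix p assume "p \<in> P"
    then obtain i where "i \<le> fst p" "snd p ! i \<noteq> 0" unfolding P_def by auto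
    then have "finite (roots p)"
      unfolding roots_def by (cases p) (auto intro: polyfun_roots_finite)
    then show "countable (roots p)" by (rule countable_finite)
  qed
  then obtain x where x: "x \<notin> (\<Union>p\<in>P. roots p)"
    using uncountable_UNIV_real by (metis UNIV_eq_I)
  have "transcendental x"
    unfolding transcendental_def
  proof (intro allI impI)
    fix n c i assume root: "(\<Sum>i\<le>n. of_int (c i) * x ^ i) = 0" and "i \<le> n"
    define cs where "cs = map c [0..<Suc n]"
    have cs: "cs ! j = c j" if "j \<le> n" for j
      unfolding cs_def using that by (simp add: nth_map_upt less_Suc_eq_le del: upt_Suc)
    have "x \<in> roots (n, cs)" unfolding roots_def using root cs by simp
    then have "(n, cs) \<notin> P" using x by blast
    then show "c i = 0" using \<open>i \<le> n\<close> cs unfolding P_def by auto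
  qed
  then show ?thesis ..
qed

lemma transcendental_powers_independent:
  assumes "transcendental x"
    and "of_int m + (\<Sum>i<d. of_int (v i) * x ^ Suc i) + of_int k * x ^ Suc d = 0"
  shows "(\<forall>i<d. v i = 0) \<and> k = 0"
proof -
  define c where "c = (\<lambda>j. if j = 0 then m else if j \<le> d then v (j - 1) else k)"
  have "(\<Sum>j\<le>Suc d. of_int (c j) * x ^ j) = of_int m + (\<Sum>i\<le>d. of_int (c (Suc i)) * x ^ Suc i)"
    by (subst sum.atMost_Suc_shift) (simp add: c_def)
  also have "(\<Sum>i\<le>d. of_int (c (Suc i)) * x ^ Suc i)
      = (\<Sum>i<d. of_int (c (Suc i)) * x ^ Suc i) + of_int k * x ^ Suc d"
    by (simp add: lessThan_Suc_atMost[symmetric] c_def)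
  also have "(\<Sum>i<d. of_int (c (Suc i)) * x ^ Suc i) = (\<Sum>i<d. of_int (v i) * x ^ Suc i)"
    by (rule sum.cong) (auto simp: c_def)
  finally have "(\<Sum>j\<le>Suc d. of_int (c j) * x ^ j) = 0"
    using assms(2) by simp
  then have c0: "c j = 0" if "j \<le> Suc d" for j
    using assms(1) that unfolding transcendental_def by blast
  have "v i = 0" if "i < d" for i
    using c0[of "Suc i"] that by (simp add: c_def)
  moreover have "k = 0" using c0[of "Suc d"] by (simp add: c_def)
  ultimately show ?thesis by blast
qed

locale independent_rotations =
  fixes d :: nat and \<alpha> :: "nat \<Rightarrow> real" and \<beta> :: real
  assumes \<beta>_pos: "0 < \<beta>" and \<beta>_less_1: "\<beta> < 1"
    and rotation_independent: "\<And>m v k. of_int m + (\<Sum>i<d. of_int (v i) * \<alpha> i) + of_int k * \<beta> = 0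
      \<Longrightarrow> (\<forall>i<d. v i = 0) \<and> k = 0"

lemma ex_independent_rotations: "\<exists>\<alpha> \<beta>. independent_rotations d \<alpha> \<beta>"
proof -
  obtain x where x: "transcendental x" using ex_transcendental ..
  define \<alpha> where "\<alpha> = (\<lambda>i. x ^ Suc i)"
  define \<beta> where "\<beta> = frac (x ^ Suc d)"
  have indep: "(\<forall>i<d. v i = 0) \<and> k = 0"
    if "of_int m + (\<Sum>i<d. of_int (v i) * \<alpha> i) + of_int k * \<beta> = 0" for m v k
  proof (rule transcendental_powers_independent[OF x, of "m - k * \<lfloor>x ^ Suc d\<rfloor>"])
    show "of_int (m - k * \<lfloor>x ^ Suc d\<rfloor>) + (\<Sum>i<d. of_int (v i) * x ^ Suc i) + of_int k * x ^ Suc d = 0"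
      using that unfolding \<alpha>_def \<beta>_def frac_def by (simp add: algebra_simps)
  qed
  have "\<beta> \<noteq> 0"
  proof
    assume "\<beta> = 0"
    then have "of_int 0 + (\<Sum>i<d. of_int 0 * \<alpha> i) + of_int 1 * \<beta> = 0" by simp
    then show False using indep[of 0 "\<lambda>_. 0" 1] by simp
  qed
  then have "0 < \<beta>" "\<beta> < 1" unfolding \<beta>_def using frac_ge_0 frac_lt_1 by (auto simp: order_le_less)
  with indep have "independent_rotations d \<alpha> \<beta>" by (simp add: independent_rotations_def)
  then show ?thesis by blast
qed

section \<open>Interval exchanges given by breakpoints\<close>

lemma finite_subdivision:
  fixes B :: "real set"
  assumes "finite B"
  obtains a :: "nat \<Rightarrow> real" and N where "a 0 = 0" "a N = 1" "\<forall>i<N. a i < a (Suc i)"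
    "\<forall>i<N. 0 \<le> a i \<and> a (Suc i) \<le> 1" "\<forall>i<N. B \<inter> {a i<..<a (Suc i)} = {}"
proof -
  define S where "S = insert 0 (insert 1 (B \<inter> {0<..<1}))"
  define L where "L = sorted_list_of_set S"
  define N where "N = length L - 1"
  have "finite S" unfolding S_def using assms by simp
  then have setL: "set L = S" unfolding L_def by simp
  have S01: "s \<in> S \<Longrightarrow> 0 \<le> s \<and> s \<le> 1" for s unfolding S_def by auto
  have lt: "i < j \<Longrightarrow> j < length L \<Longrightarrow> L ! i < L ! j" for i j
    unfolding L_def by (simp add: sorted_wrt_nth_less)
  have le: "i \<le> j \<Longrightarrow> j < length L \<Longrightarrow> L ! i \<le> L ! j" for i j
    using lt by (metis le_less order.refl)
  have nth_S: "i < length L \<Longrightarrow> L ! i \<in> S" for i using setL nth_mem by blast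
  have "0 \<in> set L" "1 \<in> set L" unfolding setL S_def by simp_all
  then obtain j0 j1 where j0: "j0 < length L" "L ! j0 = 0" and j1: "j1 < length L" "L ! j1 = 1"
    by (metis in_set_conv_nth)
  have N: "N < length L" unfolding N_def using j0 by simp
  show thesis
  proof (rule that[of "(!) L" N])
    show "L ! 0 = 0" using le[of 0 j0] j0 S01[OF nth_S[of 0]] by fastforce
    have "j1 \<le> N" using j1 unfolding N_def by simp
    then show "L ! N = 1" using le[of j1 N] j1 N S01[OF nth_S[OF N]] by simp
    show "\<forall>i<N. L ! i < L ! Suc i" using lt N by simp
    show "\<forall>i<N. 0 \<le> L ! i \<and> L ! Suc i \<le> 1" using S01 nth_S N by simp
    show "\<forall>i<N. B \<inter> {L ! i<..<L ! Suc i} = {}"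
    proof (intro allI impI equals0I)
      fix i b assume i: "i < N" and b: "b \<in> B \<inter> {L ! i<..<L ! Suc i}"
      moreover have "0 \<le> L ! i" "L ! Suc i \<le> 1" using S01 nth_S i N by simp_all
      ultimately have "b \<in> S" unfolding S_def by auto
      then obtain j where j: "j < length L" "L ! j = b" using setL by (auto simp: in_set_conv_nth)
      show False using b j le[of j i] le[of "Suc i" j] i N by (cases "j \<le> i") auto
    qed
  qed
qed

lemma IET_by_breakpoints:
  assumes "bij_betw f {0..<1} {0..<1}" "\<forall>x. x \<notin> {0..<1} \<longrightarrow> f x = x" "finite B"
    and "\<And>x y. 0 \<le> x \<Longrightarrow> x \<le> y \<Longrightarrow> y < 1 \<Longrightarrow> \<forall>b\<in>B. \<not> (x < b \<and> b \<le> y) \<Longrightarrow>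
           f y - y = f x - x"
  shows "f \<in> IET"
proof -
  obtain a :: "nat \<Rightarrow> real" and N where a: "a 0 = 0" "a N = 1" "\<forall>i<N. a i < a (Suc i)"
    "\<forall>i<N. 0 \<le> a i \<and> a (Suc i) \<le> 1" "\<forall>i<N. B \<inter> {a i<..<a (Suc i)} = {}"
    using finite_subdivision[OF assms(3)] by blast
  have "\<exists>c. \<forall>x\<in>{a i..<a (Suc i)}. f x = x + c" if i: "i < N" for i
  proof (intro exI ballI)
    fix x assume x: "x \<in> {a i..<a (Suc i)}"
    have "\<forall>b\<in>B. \<not> (a i < b \<and> b \<le> x)"
    proof (intro ballI notI)
      fix b assume "b \<in> B" "a i < b \<and> b \<le> x"
      then have "b \<in> B \<inter> {a i<..<a (Suc i)}" using x by auto
      then show False using a(5) i by blast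
    qed
    then have "f x - x = f (a i) - a i" using assms(4)[of "a i" x] a(4) i x by fastforce
    then show "f x = x + (f (a i) - a i)" by simp
  qed
  then show ?thesis unfolding IET_def using assms(1,2) a(1-3) by blast
qed

section \<open>Windows on the circle\<close>

lemma floor_diff_eq_if_frac_not_between:
  fixes t t' w :: real
  assumes "0 \<le> t" "t \<le> t'" "t' < 1" "\<not> (t < frac w \<and> frac w \<le> t')"
  shows "\<lfloor>t - w\<rfloor> = \<lfloor>t' - w\<rfloor>"
proof (rule ccontr)
  assume "\<lfloor>t - w\<rfloor> \<noteq> \<lfloor>t' - w\<rfloor>"
  moreover have "\<lfloor>t - w\<rfloor> \<le> \<lfloor>t' - w\<rfloor>" using assms by (intro floor_mono) simp
  ultimately have "\<lfloor>t - w\<rfloor> < \<lfloor>t' - w\<rfloor>" by simp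
  then have m: "t - w < of_int \<lfloor>t' - w\<rfloor>" "of_int \<lfloor>t' - w\<rfloor> \<le> t' - w"
    by (simp_all add: floor_less_iff)
  \<comment> \<open>the translate of w by an integer that lies in (t, t'] must be frac w\<close>
  define p where "p = of_int \<lfloor>t' - w\<rfloor> + w"
  have "0 \<le> p" "p < 1" using m assms unfolding p_def by linarith+
  then have "frac p = p" by (simp add: frac_eq)
  moreover have "frac p = frac w" unfolding p_def by simp
  ultimately show False using m assms(4) unfolding p_def by linarith
qed

lemma frac_less_iff_floor: "frac u < b \<longleftrightarrow> \<lfloor>u - b\<rfloor> < \<lfloor>u\<rfloor>"
  by (simp add: frac_def floor_less_iff) linarith

context independent_rotations
begin

definition phase :: "(nat \<Rightarrow> int) \<Rightarrow> real" where
  "phase z = (\<Sum>i<d. of_int (z i) * \<alpha> i)"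

definition in_window :: "(nat \<Rightarrow> int) \<Rightarrow> real \<Rightarrow> bool" where
  "in_window g s \<longleftrightarrow> frac (s - phase g) < \<beta>"

lemma phase_add: "phase (\<lambda>i. a i + b i) = phase a + phase b"
  unfolding phase_def by (simp add: sum.distrib distrib_right)

lemma phase_diff: "phase (\<lambda>i. a i - b i) = phase a - phase b"
  unfolding phase_def by (simp add: sum_subtractf left_diff_distrib)

lemma phase_zero: "phase (\<lambda>i. 0) = 0"
  unfolding phase_def by simp

lemma phase_diff_Ints_imp_eq:
  assumes "g \<in> Zd d" "h \<in> Zd d" "phase g - phase h \<in> \<int>"
  shows "g = h"
proof -
  obtain m where "phase g - phase h = of_int m" using assms(3) by (elim Ints_cases)
  then have "of_int (- m) + (\<Sum>i<d. of_int (g i - h i) * \<alpha> i) + of_int 0 * \<beta> = 0"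
    using phase_diff[of g h] unfolding phase_def by simp
  then have "\<forall>i<d. g i - h i = 0" by (rule rotation_independent[THEN conjunct1])
  then have "g i = h i" if "i < d" for i using that by simp
  moreover have "g i = h i" if "\<not> i < d" for i using assms(1,2) that by (simp add: Zd_def)
  ultimately show ?thesis by blast
qed

lemma phase_diff_minus_\<beta>_notin_Ints: "phase g - phase h - \<beta> \<notin> \<int>"
proof
  assume "phase g - phase h - \<beta> \<in> \<int>"
  then obtain m where "phase g - phase h - \<beta> = of_int m" by (elim Ints_cases)
  then have "of_int (- m) + (\<Sum>i<d. of_int (g i - h i) * \<alpha> i) + of_int (- 1) * \<beta> = 0"
    using phase_diff[of g h] unfolding phase_def by simp
  then have "(- 1 :: int) = 0" by (rule rotation_independent[THEN conjunct2])
  then show False by simp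
qed

lemma in_window_iff_floor:
  "in_window g (t + c) \<longleftrightarrow> \<lfloor>t - (phase g + \<beta> - c)\<rfloor> < \<lfloor>t - (phase g - c)\<rfloor>"
  unfolding in_window_def frac_less_iff_floor by (simp add: algebra_simps)

lemma in_window_eventually_const:
  assumes "s - phase h \<notin> \<int>" "s - phase h - \<beta> \<notin> \<int>"
  shows "\<forall>\<^sub>F s' in at s. in_window h s' = in_window h s"
proof -
  have lim: "((\<lambda>s'. frac (s' - phase h)) \<longlongrightarrow> frac (s - phase h)) (at s)"
    by (rule isCont_tendsto_compose[OF continuous_frac[OF assms(1)]]) (intro tendsto_intros)
  have "frac (s - phase h) \<noteq> \<beta>" using assms(2) frac_unique_iff by blast
  then consider "frac (s - phase h) < \<beta>" | "\<beta> < frac (s - phase h)" by linarith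
  then show ?thesis
  proof cases
    case 1
    then show ?thesis
      using order_tendstoD(2)[OF lim 1] unfolding in_window_def by (auto elim: eventually_mono)
  next
    case 2
    then show ?thesis
      using order_tendstoD(1)[OF lim 2] unfolding in_window_def by (auto elim: eventually_mono)
  qed
qed

lemma in_window_phase: "in_window g (phase g)"
  unfolding in_window_def using \<beta>_pos by simp

lemma not_in_window_left: "\<forall>\<^sub>F s in at_left (phase g). \<not> in_window g s"
proof -
  have "\<forall>\<^sub>F s in at_left (phase g). s \<in> {phase g - (1 - \<beta>)<..<phase g}"
    using \<beta>_less_1 by (intro eventually_at_left_real) simp
  moreover have "\<not> in_window g s" if "s \<in> {phase g - (1 - \<beta>)<..<phase g}" for s
  proof -
    have "frac (s - phase g) = s - phase g + 1"
      using that \<beta>_pos by (subst frac_unique_iff) auto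
    then show ?thesis unfolding in_window_def using that by simp
  qed
  ultimately show ?thesis by (auto elim: eventually_mono)
qed

lemma window_separation:
  assumes "finite T" "g \<in> Zd d" "T \<subseteq> Zd d - {g}"
  obtains s where "\<not> in_window g s" "\<forall>h\<in>T. in_window h s = in_window h (phase g)"
proof -
  have "\<forall>\<^sub>F s in at (phase g). in_window h s = in_window h (phase g)" if "h \<in> T" for h
  proof (rule in_window_eventually_const)
    show "phase g - phase h \<notin> \<int>" using phase_diff_Ints_imp_eq assms that by blast
    show "phase g - phase h - \<beta> \<notin> \<int>" by (rule phase_diff_minus_\<beta>_notin_Ints)
  qed
  then have "\<forall>\<^sub>F s in at (phase g). \<forall>h\<in>T. in_window h s = in_window h (phase g)"
    using assms(1) by (simp add: eventually_ball_finite)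
  then have "\<forall>\<^sub>F s in at_left (phase g). \<forall>h\<in>T. in_window h s = in_window h (phase g)"
    by (rule filter_leD[OF at_le, rotated]) simp
  with not_in_window_left have "\<forall>\<^sub>F s in at_left (phase g).
      \<not> in_window g s \<and> (\<forall>h\<in>T. in_window h s = in_window h (phase g))"
    by (rule eventually_conj)
  then show ?thesis using that eventually_happens'[OF trivial_limit_at_left_real] by blast
qed

end

section \<open>The representation of the wreath product\<close>

locale wreath_IET = comm_group A + independent_rotations d \<alpha> \<beta>
  for A :: "('a, 'b) monoid_scheme" (structure) and d \<alpha> \<beta> +
  fixes n :: nat and e :: "nat \<Rightarrow> 'a"
  assumes e_bij: "bij_betw e {..<n} (carrier A)"
begin

definition finsupp :: "((nat \<Rightarrow> int) \<Rightarrow> 'a) \<Rightarrow> bool" where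
  "finsupp f \<longleftrightarrow> (\<forall>g. f g \<in> carrier A) \<and> finite {g. f g \<noteq> \<one>}"

definition window_prod :: "((nat \<Rightarrow> int) \<Rightarrow> 'a) \<Rightarrow> real \<Rightarrow> 'a" where
  "window_prod f s = (\<Otimes>g\<in>{g. f g \<noteq> \<one>}. if in_window g s then f g else \<one>)"

definition idx :: "'a \<Rightarrow> nat" where
  "idx = the_inv_into {..<n} e"

text \<open>block k t is the point at relative position t of the k-th interval, whose label is e k;
  iet (f, z) rotates the relative position by phase z and multiplies the label by the lamps
  whose windows contain the rotated position.\<close>

definition block :: "nat \<Rightarrow> real \<Rightarrow> real" where
  "block k t = (real k + t) / real n"

definition iet :: "((nat \<Rightarrow> int) \<Rightarrow> 'a) \<times> (nat \<Rightarrow> int) \<Rightarrow> real \<Rightarrow> real" where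
  "iet p x = (if x \<in> {0..<1} then
     (let k = nat \<lfloor>real n * x\<rfloor>; s = frac (real n * x) + phase (snd p)
      in block (idx (window_prod (fst p) s \<otimes> e k)) (frac s))
   else x)"

lemma n_pos: "0 < n"
  using e_bij one_closed by (auto simp: bij_betw_def intro: gr0I)

lemma e_closed: "k < n \<Longrightarrow> e k \<in> carrier A"
  using e_bij by (auto simp: bij_betw_def)

lemma idx_less: "a \<in> carrier A \<Longrightarrow> idx a < n"
  unfolding idx_def using e_bij the_inv_into_into[of e "{..<n}" a "{..<n}"]
  by (simp add: bij_betw_def)

lemma e_idx: "a \<in> carrier A \<Longrightarrow> e (idx a) = a"
  unfolding idx_def using e_bij by (auto simp: bij_betw_def intro: f_the_inv_into_f)

lemma idx_e: "k < n \<Longrightarrow> idx (e k) = k"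
  unfolding idx_def using e_bij by (simp add: bij_betw_def the_inv_into_f_f)

lemma block_in_unit: "k < n \<Longrightarrow> 0 \<le> t \<Longrightarrow> t < 1 \<Longrightarrow> block k t \<in> {0..<1}"
  unfolding block_def using n_pos by (auto simp: divide_simps)

lemma floor_block:
  assumes "0 \<le> t" "t < 1"
  shows "real n * block k t = real k + t" "\<lfloor>real k + t\<rfloor> = int k"
  using assms n_pos by (simp_all add: block_def floor_eq_iff)

lemma unit_blockE:
  assumes "x \<in> {0..<1}"
  obtains k t where "k < n" "0 \<le> t" "t < 1" "x = block k t"
proof
  have "\<lfloor>real n * x\<rfloor> < int n" using assms n_pos by (simp add: floor_less_iff)
  then show "nat \<lfloor>real n * x\<rfloor> < n" using assms by (simp add: nat_less_iff)
  show "x = block (nat \<lfloor>real n * x\<rfloor>) (frac (real n * x))"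
    using assms n_pos by (simp add: block_def frac_def)
qed (simp_all add: frac_lt_1)

lemma block_inj:
  assumes "0 \<le> t" "t < 1" "0 \<le> t'" "t' < 1" "block k t = block k' t'"
  shows "k = k'" "t = t'"
proof -
  have "real k + t = real k' + t'" using floor_block assms by metis
  moreover from this have "k = k'" using floor_block(2) assms by (metis of_nat_eq_iff int_eq_iff)
  ultimately show "k = k'" "t = t'" by simp_all
qed

lemma block_le_iff: "block k t \<le> block k' t' \<longleftrightarrow> real k + t \<le> real k' + t'"
  and block_less_iff: "block k t < block k' t' \<longleftrightarrow> real k + t < real k' + t'"
  using n_pos by (simp_all add: block_def divide_le_cancel divide_less_cancel)

lemma iet_block:
  assumes "k < n" "0 \<le> t" "t < 1"
  shows "iet (f, z) (block k t)
    = block (idx (window_prod f (t + phase z) \<otimes> e k)) (frac (t + phase z))"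
proof -
  have "frac (real n * block k t) = t" "nat \<lfloor>real n * block k t\<rfloor> = k"
    using floor_block[OF assms(2,3)] assms by (simp_all add: frac_def)
  then show ?thesis using block_in_unit[OF assms] unfolding iet_def by (simp add: Let_def)
qed

lemma iet_outside: "x \<notin> {0..<1} \<Longrightarrow> iet p x = x"
  unfolding iet_def by (simp only: if_False)

lemma finsupp_closed: "finsupp f \<Longrightarrow> f g \<in> carrier A"
  unfolding finsupp_def by simp

lemma finsupp_mult:
  assumes "finsupp f" "finsupp f'"
  shows "finsupp (\<lambda>g. f g \<otimes> f' g)"
proof -
  have "{g. f g \<otimes> f' g \<noteq> \<one>} \<subseteq> {g. f g \<noteq> \<one>} \<union> {g. f' g \<noteq> \<one>}" by auto
  then show ?thesis using assms unfolding finsupp_def by (auto intro: finite_subset)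
qed

lemma supp_shift:
  fixes f :: "(nat \<Rightarrow> int) \<Rightarrow> 'a"
  shows "{g. f (\<lambda>i. g i - z i) \<noteq> \<one>} = (\<lambda>h i. h i + z i) ` {h. f h \<noteq> \<one>}"
proof -
  have "f (\<lambda>i. g i - z i) \<noteq> \<one> \<Longrightarrow> \<exists>h. f h \<noteq> \<one> \<and> g = (\<lambda>i. h i + z i)" for g
    by (rule exI[where x = "\<lambda>i. g i - z i"]) simp
  then show ?thesis by (auto simp: image_iff)
qed

lemma finsupp_shift: "finsupp f \<Longrightarrow> finsupp (\<lambda>g. f (\<lambda>i. g i - z i))"
  unfolding finsupp_def supp_shift by simp

lemma window_prod_closed: "finsupp f \<Longrightarrow> window_prod f s \<in> carrier A"
  unfolding window_prod_def finsupp_def by (intro finprod_closed) auto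

lemma window_prod_one: "window_prod (\<lambda>g. \<one>) s = \<one>"
  unfolding window_prod_def by simp

lemma window_prod_add_of_int: "window_prod f (s + of_int m) = window_prod f s"
proof -
  have "frac (s + of_int m - phase g) = frac (s - phase g)" for g
    using frac_add_of_int_right[of "s - phase g" m] by (simp add: algebra_simps)
  then show ?thesis unfolding window_prod_def in_window_def by simp
qed

lemma window_prod_frac: "window_prod f (frac s + c) = window_prod f (s + c)"
  using window_prod_add_of_int[of f "s + c" "- \<lfloor>s\<rfloor>"] by (simp add: frac_def algebra_simps)

lemma window_prod_eq_finprod:
  assumes "finsupp f" "finite S" "{g. f g \<noteq> \<one>} \<subseteq> S"
  shows "window_prod f s = (\<Otimes>g\<in>S. if in_window g s then f g else \<one>)"
  unfolding window_prod_def
  by (rule finprod_mono_neutral_cong_left) (use assms in \<open>auto simp: finsupp_def\<close>)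

lemma window_prod_cong:
  assumes "finsupp f" "\<And>g. f g \<noteq> \<one> \<Longrightarrow> in_window g s = in_window g s'"
  shows "window_prod f s = window_prod f s'"
  unfolding window_prod_def by (rule finprod_cong') (use assms in \<open>auto simp: finsupp_def\<close>)

lemma window_prod_mult:
  assumes "finsupp f" "finsupp f'"
  shows "window_prod (\<lambda>g. f g \<otimes> f' g) s = window_prod f s \<otimes> window_prod f' s"
proof -
  define S where "S = {g. f g \<noteq> \<one>} \<union> {g. f' g \<noteq> \<one>}"
  have S: "finite S" "{g. f g \<noteq> \<one>} \<subseteq> S" "{g. f' g \<noteq> \<one>} \<subseteq> S"
    "{g. f g \<otimes> f' g \<noteq> \<one>} \<subseteq> S"
    using assms unfolding S_def finsupp_def by auto
  have "window_prod (\<lambda>g. f g \<otimes> f' g) s = (\<Otimes>g\<in>S. if in_window g s then f g \<otimes> f' g else \<one>)"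
    by (rule window_prod_eq_finprod[OF finsupp_mult[OF assms] S(1,4)])
  also have "\<dots> = (\<Otimes>g\<in>S. (if in_window g s then f g else \<one>) \<otimes> (if in_window g s then f' g else \<one>))"
    by (rule finprod_cong') (auto simp: assms finsupp_closed)
  also have "\<dots> = window_prod f s \<otimes> window_prod f' s"
    by (simp add: finprod_multf Pi_iff assms finsupp_closed
        window_prod_eq_finprod[OF assms(1) S(1,2)] window_prod_eq_finprod[OF assms(2) S(1,3)])
  finally show ?thesis .
qed

lemma window_prod_shift:
  assumes "finsupp f"
  shows "window_prod (\<lambda>g. f (\<lambda>i. g i - z i)) s = window_prod f (s - phase z)"
proof -
  have inj: "inj_on (\<lambda>h i. h i + z i :: int) S" for S
    by (rule inj_onI) (metis add_right_cancel ext)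
  have "window_prod (\<lambda>g. f (\<lambda>i. g i - z i)) s
      = (\<Otimes>h\<in>{h. f h \<noteq> \<one>}. if in_window (\<lambda>i. h i + z i) s then f (\<lambda>i. h i + z i - z i) else \<one>)"
    unfolding window_prod_def supp_shift
    by (subst finprod_reindex) (use assms inj in \<open>auto simp: finsupp_def Pi_iff\<close>)
  also have "\<dots> = window_prod f (s - phase z)"
    unfolding window_prod_def in_window_def phase_add
    by (rule finprod_cong') (auto simp: assms finsupp_closed algebra_simps)
  finally show ?thesis .
qed

lemma window_prod_wreath_mult:
  assumes "finsupp f" "finsupp f'"
  shows "window_prod (\<lambda>g. f g \<otimes> f' (\<lambda>i. g i - z i)) s = window_prod f s \<otimes> window_prod f' (s - phase z)"
  using window_prod_mult[OF assms(1) finsupp_shift[OF assms(2)]] window_prod_shift[OF assms(2)] by simp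

lemma window_prod_insert:
  assumes "finsupp f" "finite T" "g \<notin> T" "{h. f h \<noteq> \<one>} \<subseteq> insert g T"
  shows "window_prod f s
    = (if in_window g s then f g else \<one>) \<otimes> (\<Otimes>h\<in>T. if in_window h s then f h else \<one>)"
  using window_prod_eq_finprod[OF assms(1) _ assms(4)] assms
  by (simp add: finprod_insert Pi_iff finsupp_closed)

lemma window_prod_inj:
  assumes "finsupp f" "finsupp f'" "\<forall>g. f g \<noteq> \<one> \<longrightarrow> g \<in> Zd d" "\<forall>g. f' g \<noteq> \<one> \<longrightarrow> g \<in> Zd d"
    and eq: "window_prod f = window_prod f'"
  shows "f = f'"
proof
  fix g show "f g = f' g"
  proof (cases "g \<in> Zd d")
    case False
    then show ?thesis using assms(3,4) by metis
  next
    case True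
    define T where "T = ({h. f h \<noteq> \<one>} \<union> {h. f' h \<noteq> \<one>}) - {g}"
    define rest where "rest F s = (\<Otimes>h\<in>T. if in_window h s then F h else \<one>)" for F s
    have T: "finite T" "g \<notin> T" "T \<subseteq> Zd d - {g}"
      using assms unfolding T_def finsupp_def by auto
    have split: "window_prod F s = (if in_window g s then F g else \<one>) \<otimes> rest F s"
      if "F \<in> {f, f'}" for F s
      unfolding rest_def
      by (rule window_prod_insert) (use that assms(1,2) T(1,2) in \<open>auto simp: T_def\<close>)
    have rest_closed: "rest F s \<in> carrier A" if "F \<in> {f, f'}" for F s
      unfolding rest_def using that assms by (intro finprod_closed) (auto simp: finsupp_closed)
    obtain s where s: "\<not> in_window g s" "\<forall>h\<in>T. in_window h s = in_window h (phase g)"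
      by (rule window_separation[OF T(1) True T(3)])
    have "rest F s = rest F (phase g)" if "F \<in> {f, f'}" for F
      unfolding rest_def
      by (rule finprod_cong') (use s(2) that assms(1,2) in \<open>auto simp: finsupp_closed\<close>)
    moreover have "rest f s = rest f' s"
      using fun_cong[OF eq, of s] split[of _ s] s(1) rest_closed by simp
    ultimately have "rest f (phase g) = rest f' (phase g)" by simp
    moreover have "f g \<otimes> rest f (phase g) = f' g \<otimes> rest f' (phase g)"
      using fun_cong[OF eq, of "phase g"] split[of _ "phase g"] in_window_phase by simp
    ultimately show ?thesis
      using assms(1,2) rest_closed by (simp add: finsupp_closed)
  qed
qed

lemma iet_mult:
  assumes "finsupp f" "finsupp f'"
  shows "iet (f, z) (iet (f', z') x) = iet (\<lambda>g. f g \<otimes> f' (\<lambda>i. g i - z i), \<lambda>i. z i + z' i) x"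
proof (cases "x \<in> {0..<1}")
  case False
  then show ?thesis by (simp add: iet_outside)
next
  case True
  then obtain k t where kt: "k < n" "0 \<le> t" "t < 1" "x = block k t" by (rule unit_blockE)
  define s where "s = t + phase z'"
  define k' where "k' = idx (window_prod f' s \<otimes> e k)"
  have k': "k' < n" "e k' = window_prod f' s \<otimes> e k"
    unfolding k'_def using idx_less e_idx window_prod_closed[OF assms(2)] e_closed[OF kt(1)] by auto
  have "iet (f, z) (iet (f', z') x) = iet (f, z) (block k' (frac s))"
    using iet_block[OF kt(1-3)] kt(4) unfolding k'_def s_def by simp
  also have "\<dots> = block (idx (window_prod f (frac s + phase z) \<otimes> e k')) (frac (frac s + phase z))"
    by (rule iet_block[OF k'(1) frac_ge_0 frac_lt_1])
  also have "\<dots> = block (idx (window_prod f (s + phase z) \<otimes> (window_prod f' s \<otimes> e k))) (frac (s + phase z))"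
    unfolding window_prod_frac k'(2) by simp
  also have "\<dots> = iet (\<lambda>g. f g \<otimes> f' (\<lambda>i. g i - z i), \<lambda>i. z i + z' i) x"
  proof -
    have "t + phase (\<lambda>i. z i + z' i) = s + phase z" unfolding phase_add s_def by simp
    then show ?thesis
      unfolding kt(4) iet_block[OF kt(1-3)] window_prod_wreath_mult[OF assms]
      using window_prod_closed assms e_closed[OF kt(1)] by (simp add: m_assoc)
  qed
  finally show ?thesis .
qed

lemma iet_one: "iet (\<lambda>g. \<one>, \<lambda>i. 0) x = x"
proof (cases "x \<in> {0..<1}")
  case False
  then show ?thesis by (simp add: iet_outside)
next
  case True
  then obtain k t where "k < n" "0 \<le> t" "t < 1" "x = block k t" by (rule unit_blockE)
  then show ?thesis by (simp add: iet_block window_prod_one phase_zero e_closed idx_e frac_eq)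
qed

lemma iet_bij:
  assumes "finsupp f"
  shows "bij_betw (iet (f, z)) {0..<1} {0..<1}"
proof -
  define f' where "f' = (\<lambda>g. inv (f (\<lambda>i. g i + z i)))"
  have "finsupp (\<lambda>g. f (\<lambda>i. g i - (- z i)))" by (rule finsupp_shift[OF assms])
  then have f': "finsupp f'"
    unfolding f'_def finsupp_def by (simp add: finsupp_closed[OF assms])
  have "iet (f, z) (iet (f', \<lambda>i. - z i) x) = x" for x
    using iet_mult[OF assms f'] by (simp add: f'_def finsupp_closed[OF assms] iet_one)
  moreover have "iet (f', \<lambda>i. - z i) (iet (f, z) x) = x" for x
    using iet_mult[OF f' assms] by (simp add: f'_def finsupp_closed[OF assms] iet_one)
  moreover have "iet p x \<in> {0..<1}" if "finsupp (fst p)" "x \<in> {0..<1}" for p x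
    using that iet_block block_in_unit idx_less window_prod_closed e_closed frac_ge_0 frac_lt_1
    by (metis m_closed prod.collapse unit_blockE)
  ultimately show ?thesis
    using assms f' by (intro bij_betw_byWitness[where f' = "iet (f', \<lambda>i. - z i)"]) auto
qed

text \<open>The circle positions at which the displacement of iet (f, z) on a block may jump: there
  the rotated position crosses an integer or an endpoint of a window.\<close>

definition breaks :: "((nat \<Rightarrow> int) \<Rightarrow> 'a) \<Rightarrow> (nat \<Rightarrow> int) \<Rightarrow> real set" where
  "breaks f z = insert (- phase z) (\<Union>g\<in>{g. f g \<noteq> \<one>}. {phase g - phase z, phase g + \<beta> - phase z})"

lemma finite_breaks: "finsupp f \<Longrightarrow> finite (breaks f z)"
  unfolding breaks_def finsupp_def by simp

lemma iet_displacement_on_block: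
  assumes "finsupp f" "k < n" "0 \<le> t" "t \<le> t'" "t' < 1"
    and no_break: "\<forall>w\<in>breaks f z. \<not> (t < frac w \<and> frac w \<le> t')"
  shows "iet (f, z) (block k t') - block k t' = iet (f, z) (block k t) - block k t"
proof -
  define c where "c = phase z"
  have fl: "\<lfloor>t - w\<rfloor> = \<lfloor>t' - w\<rfloor>" if "w \<in> breaks f z" for w
    using floor_diff_eq_if_frac_not_between assms(3-5) no_break that by blast
  have "window_prod f (t + c) = window_prod f (t' + c)"
  proof (rule window_prod_cong[OF assms(1)])
    fix g assume "f g \<noteq> \<one>"
    then have "phase g - c \<in> breaks f z" "phase g + \<beta> - c \<in> breaks f z"
      unfolding breaks_def c_def by auto
    then show "in_window g (t + c) = in_window g (t' + c)"
      unfolding in_window_iff_floor using fl by simp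
  qed
  moreover have "\<lfloor>t + c\<rfloor> = \<lfloor>t' + c\<rfloor>" using fl[of "- c"] by (simp add: breaks_def c_def)
  moreover have "iet (f, z) (block k u) = block (idx (window_prod f (u + c) \<otimes> e k)) (frac (u + c))"
    if "u \<in> {t, t'}" for u
    unfolding c_def using that assms by (intro iet_block) auto
  ultimately show ?thesis by (simp add: block_def frac_def add_divide_distrib diff_divide_distrib)
qed

lemma iet_in_IET:
  assumes "finsupp f"
  shows "iet (f, z) \<in> IET"
proof (rule IET_by_breakpoints)
  show "bij_betw (iet (f, z)) {0..<1} {0..<1}" by (rule iet_bij[OF assms])
  show "\<forall>x. x \<notin> {0..<1} \<longrightarrow> iet (f, z) x = x" by (simp add: iet_outside)
  define B where "B = (\<lambda>k. block k 0) ` {..<n} \<union> (\<lambda>(k, w). block k (frac w)) ` ({..<n} \<times> breaks f z)"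
  show "finite B" unfolding B_def using finite_breaks[OF assms] by simp
  fix x y assume "0 \<le> x" "x \<le> y" "y < 1" and no_break: "\<forall>b\<in>B. \<not> (x < b \<and> b \<le> y)"
  then have "x \<in> {0..<1}" "y \<in> {0..<1}" by simp_all
  then obtain k t k' t' where kt: "k < n" "0 \<le> t" "t < 1" "x = block k t"
    and kt': "k' < n" "0 \<le> t'" "t' < 1" "y = block k' t'"
    by (elim unit_blockE)
  have "k = k'"
  proof (rule linorder_cases[of k k'])
    assume "k < k'"
    then have "x < block k' 0 \<and> block k' 0 \<le> y"
      using kt kt' by (simp add: block_le_iff block_less_iff)
    moreover have "block k' 0 \<in> B" using kt'(1) unfolding B_def by blast
    ultimately show ?thesis using no_break by blast
  next
    assume "k' < k"
    then have "y < x" using kt kt' by (simp add: block_less_iff)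
    then show ?thesis using \<open>x \<le> y\<close> by simp
  qed
  moreover have "\<forall>w\<in>breaks f z. \<not> (t < frac w \<and> frac w \<le> t')"
  proof (intro ballI)
    fix w assume "w \<in> breaks f z"
    then have "block k (frac w) \<in> B" using kt(1) unfolding B_def by force
    then have "\<not> (x < block k (frac w) \<and> block k (frac w) \<le> y)" using no_break by blast
    then show "\<not> (t < frac w \<and> frac w \<le> t')"
      using kt kt' \<open>k = k'\<close> by (simp add: block_le_iff block_less_iff)
  qed
  moreover have "t \<le> t'" using \<open>x \<le> y\<close> kt kt' \<open>k = k'\<close> by (simp add: block_le_iff)
  ultimately show "iet (f, z) y - y = iet (f, z) x - x"
    using iet_displacement_on_block[OF assms] kt kt' by blast
qed

lemma wreath_carrierD:
  assumes "(f, z) \<in> carrier (wreath_prod A d)"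
  shows "finsupp f" "z \<in> Zd d" "\<forall>g. f g \<noteq> \<one> \<longrightarrow> g \<in> Zd d"
proof -
  have c: "z \<in> Zd d" "\<forall>g\<in>Zd d. f g \<in> carrier A" "\<forall>g. g \<notin> Zd d \<longrightarrow> f g = \<one>"
    "finite {g. f g \<noteq> \<one>}"
    using assms by (simp_all add: wreath_prod_def)
  have "f g \<in> carrier A" for g using c(2,3) by (cases "g \<in> Zd d") auto
  with c(4) show "finsupp f" unfolding finsupp_def by blast
  show "z \<in> Zd d" by (rule c(1))
  show "\<forall>g. f g \<noteq> \<one> \<longrightarrow> g \<in> Zd d" using c(3) by blast
qed

lemma iet_inj:
  assumes "(f, z) \<in> carrier (wreath_prod A d)" "(f', z') \<in> carrier (wreath_prod A d)"
    and eq: "iet (f, z) = iet (f', z')"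
  shows "f = f'" "z = z'"
proof -
  note f = wreath_carrierD[OF assms(1)] and f' = wreath_carrierD[OF assms(2)]
  have blocks: "frac (t + phase z) = frac (t + phase z') \<and>
      window_prod f (t + phase z) \<otimes> e 0 = window_prod f' (t + phase z') \<otimes> e 0"
    if "0 \<le> t" "t < 1" for t
  proof -
    have "block (idx (window_prod f (t + phase z) \<otimes> e 0)) (frac (t + phase z))
        = block (idx (window_prod f' (t + phase z') \<otimes> e 0)) (frac (t + phase z'))"
      using fun_cong[OF eq, of "block 0 t"] iet_block[OF n_pos that] by simp
    note eq_blocks = block_inj[OF frac_ge_0 frac_lt_1 frac_ge_0 frac_lt_1 this]
    have "window_prod f (t + phase z) \<otimes> e 0 \<in> carrier A"
      "window_prod f' (t + phase z') \<otimes> e 0 \<in> carrier A"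
      using window_prod_closed f(1) f'(1) e_closed[OF n_pos] by simp_all
    from this[THEN e_idx] eq_blocks show ?thesis by metis
  qed
  have "frac (phase z) = frac (phase z')" using blocks[of 0] by simp
  then have "phase z - phase z' \<in> \<int>" by (elim frac_eqE) simp
  then show "z = z'" using phase_diff_Ints_imp_eq f(2) f'(2) by blast
  have "window_prod f (t + phase z) = window_prod f' (t + phase z)" if "0 \<le> t" "t < 1" for t
    using blocks[OF that] \<open>z = z'\<close> right_cancel[OF e_closed[OF n_pos]]
      window_prod_closed[OF f(1)] window_prod_closed[OF f'(1)] by simp
  note on_unit = this
  have "window_prod f s = window_prod f' s" for s
  proof -
    have "window_prod f s = window_prod f (frac (s - phase z) + phase z)"
      using window_prod_frac[of f "s - phase z"] by simp
    also have "\<dots> = window_prod f' (frac (s - phase z) + phase z)"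
      by (rule on_unit[OF frac_ge_0 frac_lt_1])
    also have "\<dots> = window_prod f' s"
      using window_prod_frac[of f' "s - phase z"] by simp
    finally show ?thesis .
  qed
  then show "f = f'" using window_prod_inj f f' by blast
qed

lemma iet_hom: "iet \<in> hom (wreath_prod A d) IET_group"
proof (rule homI)
  fix p assume "p \<in> carrier (wreath_prod A d)"
  moreover obtain f z where "p = (f, z)" by fastforce
  ultimately show "iet p \<in> carrier IET_group"
    using iet_in_IET wreath_carrierD(1) by (simp add: IET_group_def)
next
  fix p q assume "p \<in> carrier (wreath_prod A d)" "q \<in> carrier (wreath_prod A d)"
  moreover obtain f z f' z' where pq: "p = (f, z)" "q = (f', z')" by fastforce
  ultimately have "finsupp f" "finsupp f'" using wreath_carrierD(1) by simp_all
  then show "iet (p \<otimes>\<^bsub>wreath_prod A d\<^esub> q) = iet p \<otimes>\<^bsub>IET_group\<^esub> iet q"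
    unfolding pq using iet_mult by (simp add: IET_group_def wreath_prod_def fun_eq_iff)
qed

lemma iet_inj_on: "inj_on iet (carrier (wreath_prod A d))"
proof (rule inj_onI)
  fix p q assume "p \<in> carrier (wreath_prod A d)" "q \<in> carrier (wreath_prod A d)" "iet p = iet q"
  moreover obtain f z f' z' where "p = (f, z)" "q = (f', z')" by fastforce
  ultimately show "p = q" using iet_inj by simp
qed

end

theorem mainTheorem6:
  fixes A :: "('a, 'b) monoid_scheme" and d :: nat
  assumes "d \<ge> 1" and "comm_group A" and "finite (carrier A)"
  shows "\<exists>\<phi>. \<phi> \<in> hom (wreath_prod A d) IET_group \<and> inj_on \<phi> (carrier (wreath_prod A d))"
proof -
  \<comment> \<open>the construction does not need d \<ge> 1\<close>
  obtain \<alpha> \<beta> where "independent_rotations d \<alpha> \<beta>" using ex_independent_rotations by blast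
  moreover obtain e where "bij_betw e {..<card (carrier A)} (carrier A)"
    using ex_bij_betw_nat_finite[OF assms(3)] by (auto simp: atLeast0LessThan)
  ultimately interpret wreath_IET A d \<alpha> \<beta> "card (carrier A)" e
    using assms(2) by (simp add: wreath_IET_def wreath_IET_axioms_def)
  show ?thesis using iet_hom iet_inj_on by blast
qed

end
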